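(* Let $S$ be a cyclotomic numerical semigroup. Then \[ \mathrm P_S(x)=\prod_{d\in\mathcal D}\Phi_d(x)^{e_d}, \] where $\mathcal D=\{d_1,\ldots,d_s\}$ is a finite set of positive integers and the exponents $e_d$ are positive integers. Furthermore, all elements of $\mathcal D$ are composite.
   Context: A numerical semigroup is a submonoid $S$ of $(\mathbb N,+)$ with $\mathbb N\setminus S$ finite; its semigroup polynomial is $\mathrm P_S(x)=(1-x)\sum_{s\in S}x^s$ (a monic polynomial with integer coefficients). A Kronecker polynomial is a monic polynomial with integer coefficients all of whose complex roots lie in the closed unit disc. $S$ is called cyclotomic if $\mathrm P_S$ is a Kronecker polynomial. $\Phi_n$ denotes the $n$-th cyclotomic polynomial. *)

theory Defs
  imports "HOL-Computational_Algebra.Computational_Algebra" "HOL-Analysis.Analysis"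
begin

definition numerical_semigroup :: "nat set \<Rightarrow> bool" where
  "numerical_semigroup S \<longleftrightarrow> 0 \<in> S \<and> (\<forall>a\<in>S. \<forall>b\<in>S. a + b \<in> S) \<and> finite (UNIV - S)"

definition semigroup_poly :: "nat set \<Rightarrow> int poly" where
  "semigroup_poly S = (THE p. fps_of_poly p = (1 - fps_X) * Abs_fps (\<lambda>n. if n \<in> S then 1 else 0))"

definition kronecker_poly :: "int poly \<Rightarrow> bool" where
  "kronecker_poly p \<longleftrightarrow> lead_coeff p = 1 \<and>
     (\<forall>z::complex. poly (map_poly of_int p) z = 0 \<longrightarrow> norm z \<le> 1)"

definition cyclotomic_semigroup :: "nat set \<Rightarrow> bool" where
  "cyclotomic_semigroup S \<longleftrightarrow> numerical_semigroup S \<and> kronecker_poly (semigroup_poly S)"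

definition cyclo :: "nat \<Rightarrow> complex poly" where
  "cyclo n = (\<Prod>k\<in>{k. 1 \<le> k \<and> k \<le> n \<and> coprime k n}. [:- cis (2 * pi * real k / real n), 1:])"

definition composite :: "nat \<Rightarrow> bool" where
  "composite n \<longleftrightarrow> n > 1 \<and> \<not> prime n"

end

theory Submission
  imports Defs "HOL-Number_Theory.Totient"
begin

text \<open>
  By Kronecker's theorem, if all roots of a monic integer polynomial lie in the closed unit disc,
  its nonzero roots are roots of unity; the semigroup polynomial has constant term 1, so all its
  roots are roots of unity. The multiplicity of a root \<open>\<eta>\<close> of an integer polynomial
  does not drop when \<open>\<eta>\<close> is replaced by \<open>\<eta>\<^sup>p\<close> for a prime \<open>p\<close> coprime to its order
  (Dedekind's argument for the irreducibility of cyclotomic polynomials), so the multiplicity is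
  constant on primitive \<open>d\<close>-th roots of unity and the polynomial is a product of powers of
  \<open>\<Phi>\<^sub>d\<close>. Finally the semigroup polynomial takes the value 1 at 1, while \<open>\<Phi>\<^sub>1(1) = 0\<close> and, for
  primes \<open>p\<close>, \<open>\<Phi>\<^sub>p(1) = p\<close> with \<open>\<Phi>\<^sub>p\<close> monic and integral, so neither can be a factor.
\<close>

lemma map_poly_of_int_add:
  "map_poly (of_int :: int \<Rightarrow> 'a::comm_ring_1) (p + q) = map_poly of_int p + map_poly of_int q"
  by (rule poly_eqI) (simp add: coeff_map_poly)

lemma map_poly_of_int_diff:
  "map_poly (of_int :: int \<Rightarrow> 'a::comm_ring_1) (p - q) = map_poly of_int p - map_poly of_int q"
  by (rule poly_eqI) (simp add: coeff_map_poly)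

lemma map_poly_of_int_mult:
  "map_poly (of_int :: int \<Rightarrow> 'a::comm_ring_1) (p * q) = map_poly of_int p * map_poly of_int q"
  by (rule poly_eqI) (simp add: coeff_map_poly coeff_mult of_int_sum)

lemma map_poly_of_int_const: "map_poly (of_int :: int \<Rightarrow> 'a::comm_ring_1) [:c:] = [:of_int c:]"
  by (rule poly_eqI) (simp add: coeff_map_poly coeff_pCons split: nat.splits)

lemma map_poly_of_int_pCons:
  "map_poly (of_int :: int \<Rightarrow> 'a::comm_ring_1) (pCons a p) = pCons (of_int a) (map_poly of_int p)"
  by (rule poly_eqI) (simp add: coeff_map_poly coeff_pCons split: nat.splits)

lemma map_poly_of_int_power:
  "map_poly (of_int :: int \<Rightarrow> 'a::comm_ring_1) (p ^ n) = map_poly of_int p ^ n"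
  by (induction n) (simp_all add: map_poly_of_int_mult)

lemma map_poly_of_int_smult:
  "map_poly (of_int :: int \<Rightarrow> 'a::comm_ring_1) (smult c p) = smult (of_int c) (map_poly of_int p)"
  by (rule poly_eqI) (simp add: coeff_map_poly)

lemma map_poly_of_int_monom:
  "map_poly (of_int :: int \<Rightarrow> 'a::comm_ring_1) (monom c n) = monom (of_int c) n"
  by (simp add: map_poly_monom)

lemma map_poly_of_int_of_nat: "map_poly (of_int :: int \<Rightarrow> 'a::comm_ring_1) (of_nat n) = of_nat n"
  by (induction n) (simp_all add: map_poly_of_int_add)

lemma map_poly_of_int_pderiv:
  "map_poly (of_int :: int \<Rightarrow> 'a::idom) (pderiv p) = pderiv (map_poly of_int p)"
  by (rule poly_eqI) (simp add: coeff_map_poly coeff_pderiv)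

lemma map_poly_of_int_sum:
  "map_poly (of_int :: int \<Rightarrow> 'a::comm_ring_1) (sum f A) = (\<Sum>x\<in>A. map_poly of_int (f x))"
  by (induction A rule: infinite_finite_induct) (simp_all add: map_poly_of_int_add)

lemma map_poly_of_int_pcompose:
  "map_poly (of_int :: int \<Rightarrow> 'a::comm_ring_1) (pcompose p q) =
     pcompose (map_poly of_int p) (map_poly of_int q)"
  by (induction p rule: pCons_induct)
     (simp_all add: pcompose_pCons map_poly_of_int_add map_poly_of_int_mult map_poly_of_int_const
                    map_poly_pCons)

lemma map_poly_of_int_eq_iff:
  "map_poly (of_int :: int \<Rightarrow> 'a::ring_char_0) p = map_poly of_int q \<longleftrightarrow> p = q"
  by (auto simp: poly_eq_iff coeff_map_poly)

lemma map_poly_of_int_eq_0_iff: "map_poly (of_int :: int \<Rightarrow> 'a::ring_char_0) p = 0 \<longleftrightarrow> p = 0"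
  using map_poly_of_int_eq_iff[of p 0] by simp

lemma degree_map_poly_of_int: "degree (map_poly (of_int :: int \<Rightarrow> 'a::ring_char_0) p) = degree p"
  by (rule degree_map_poly) simp

lemma lead_coeff_map_poly_of_int:
  "lead_coeff (map_poly (of_int :: int \<Rightarrow> 'a::ring_char_0) p) = of_int (lead_coeff p)"
  by (simp add: degree_map_poly_of_int coeff_map_poly)

lemma poly_map_poly_of_int_of_int:
  "poly (map_poly (of_int :: int \<Rightarrow> 'a::comm_ring_1) p) (of_int x) = of_int (poly p x)"
  by (induction p rule: pCons_induct) (simp_all add: map_poly_of_int_pCons)

lemma map_poly_of_rat_add:
  "map_poly (of_rat :: rat \<Rightarrow> 'a::field_char_0) (p + q) = map_poly of_rat p + map_poly of_rat q"
  by (rule poly_eqI) (simp add: coeff_map_poly of_rat_add)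

lemma map_poly_of_rat_mult:
  "map_poly (of_rat :: rat \<Rightarrow> 'a::field_char_0) (p * q) = map_poly of_rat p * map_poly of_rat q"
  by (rule poly_eqI) (simp add: coeff_map_poly coeff_mult of_rat_sum of_rat_mult)

lemma map_poly_of_rat_smult:
  "map_poly (of_rat :: rat \<Rightarrow> 'a::field_char_0) (smult c p) = smult (of_rat c) (map_poly of_rat p)"
  by (rule poly_eqI) (simp add: coeff_map_poly of_rat_mult)

lemma map_poly_of_rat_of_int:
  "map_poly (of_rat :: rat \<Rightarrow> 'a::field_char_0) (map_poly of_int p) = map_poly of_int p"
  by (rule poly_eqI) (simp add: coeff_map_poly)

lemma degree_monom_minus_1:
  "n > 0 \<Longrightarrow> degree (monom (1::'a::comm_ring_1) n - 1) = n"
  by (rule antisym) (auto intro!: degree_le le_degree simp: coeff_monom)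

lemma lead_coeff_monom_minus_1:
  "n > 0 \<Longrightarrow> lead_coeff (monom (1::'a::comm_ring_1) n - 1) = 1"
  by (simp add: degree_monom_minus_1 coeff_monom)


section \<open>Kronecker's theorem\<close>

lemma fps_deriv_mult_logderiv:
  fixes A B P Q :: "'a::comm_ring_1 fps"
  assumes "fps_deriv A = A * P" "fps_deriv B = B * Q"
  shows "fps_deriv (A * B) = (A * B) * (P + Q)"
  using assms by (simp add: fps_deriv_mult algebra_simps)

lemma fps_deriv_power_logderiv:
  fixes A P :: "'a::comm_ring_1 fps"
  assumes "fps_deriv A = A * P"
  shows "fps_deriv (A ^ n) = A ^ n * (of_nat n * P)"
proof (induction n)
  case (Suc n)
  have "fps_deriv (A ^ n * A) = (A ^ n * A) * (of_nat n * P + P)"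
    by (rule fps_deriv_mult_logderiv[OF Suc assms])
  then show ?case by (simp add: algebra_simps del: power_Suc add: power_Suc2)
qed simp

lemma fps_deriv_prod_logderiv:
  fixes A P :: "'b \<Rightarrow> 'a::comm_ring_1 fps"
  assumes "finite R" "\<And>z. z \<in> R \<Longrightarrow> fps_deriv (A z) = A z * P z"
  shows "fps_deriv (\<Prod>z\<in>R. A z) = (\<Prod>z\<in>R. A z) * (\<Sum>z\<in>R. P z)"
  using assms
  by (induction R rule: finite_induct) (simp_all add: fps_deriv_mult_logderiv algebra_simps)

lemma fps_deriv_one_minus_const_X:
  fixes z :: "'a::comm_ring_1"
  shows "fps_deriv (1 - fps_const z * fps_X) =
     (1 - fps_const z * fps_X) * Abs_fps (\<lambda>n. - (z ^ (n + 1)))"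
proof -
  define F where "F = Abs_fps (\<lambda>n. - (z ^ (n + 1)))"
  have "(1 - fps_const z * fps_X) * F = F - fps_const z * (fps_X * F)"
    by (simp add: algebra_simps)
  also have "\<dots> = - fps_const z"
  proof (rule fps_ext)
    show "(F - fps_const z * (fps_X * F)) $ n = (- fps_const z) $ n" for n
      by (cases n) (simp_all add: F_def fps_X_mult_nth)
  qed
  finally show ?thesis by (simp add: F_def)
qed

lemma fps_logderiv_nth_Ints:
  fixes A P :: "'a::comm_ring_1 fps"
  assumes dA: "fps_deriv A = A * P" and A0: "A $ 0 = 1" and Aint: "\<And>i. A $ i \<in> \<int>"
  shows "P $ n \<in> \<int>"
proof (induction n rule: less_induct)
  case (less n)
  have "fps_deriv A $ n = (\<Sum>i=0..n. A $ i * P $ (n - i))" by (simp add: dA fps_mult_nth)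
  also have "\<dots> = P $ n + (\<Sum>i=Suc 0..n. A $ i * P $ (n - i))"
    by (simp add: sum.atLeast_Suc_atMost A0)
  finally have "P $ n = fps_deriv A $ n - (\<Sum>i=Suc 0..n. A $ i * P $ (n - i))"
    by simp
  moreover have "(\<Sum>i=Suc 0..n. A $ i * P $ (n - i)) \<in> \<int>"
    by (intro Ints_sum Ints_mult Aint less) auto
  ultimately show ?case by (simp add: Aint)
qed

lemma reflect_poly_eq_prod_roots:
  fixes f :: "complex poly"
  assumes "lead_coeff f = 1"
  shows "reflect_poly f = (\<Prod>z | poly f z = 0. [:1, -z:] ^ order z f)"
proof -
  have dec: "f = (\<Prod>z | poly f z = 0. [:-z, 1:] ^ order z f)"
    using complex_poly_decompose[of f] assms by simp
  have "reflect_poly [:-z, 1:] = [:1, -z:]" for z :: complex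
    by (rule poly_eqI) (auto simp: coeff_reflect_poly coeff_pCons split: nat.splits)
  then show ?thesis by (subst dec) (simp add: reflect_poly_prod reflect_poly_power)
qed

text \<open>
  Newton's identities in generating-function form: the logarithmic derivative of the reversed
  polynomial has the negated power sums of the roots as coefficients, and it is integral because
  the reversed polynomial is integral with constant term 1.
\<close>
lemma power_sum_roots_Ints:
  fixes f :: "complex poly"
  assumes lead: "lead_coeff f = 1" and ints: "\<And>i. coeff f i \<in> \<int>"
  shows "(\<Sum>z | poly f z = 0. of_nat (order z f) * z ^ k) \<in> \<int>"
proof -
  define R where "R = {z. poly f z = 0}"
  have "f \<noteq> 0" using lead by auto
  then have finR: "finite R" unfolding R_def by (rule poly_roots_finite)
  have refl: "reflect_poly f = (\<Prod>z\<in>R. [:1, -z:] ^ order z f)"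
    unfolding R_def using lead by (rule reflect_poly_eq_prod_roots)
  have lin: "fps_of_poly [:1, -z:] = 1 - fps_const z * fps_X" for z :: complex
    by (simp add: fps_of_poly_pCons fps_const_neg[symmetric] mult.commute del: fps_const_neg)
  define A where "A = fps_of_poly (reflect_poly f)"
  define P where "P = (\<Sum>z\<in>R. of_nat (order z f) * Abs_fps (\<lambda>n. - (z ^ (n + 1))))"
  have dA: "fps_deriv A = A * P"
    unfolding A_def refl P_def fps_of_poly_prod fps_of_poly_power lin
    by (rule fps_deriv_prod_logderiv[OF finR]) (rule fps_deriv_power_logderiv[OF fps_deriv_one_minus_const_X])
  have Aint: "A $ i \<in> \<int>" for i
    by (simp add: A_def coeff_reflect_poly ints)
  have A0: "A $ 0 = 1" by (simp add: A_def lead)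
  have Pint: "P $ n \<in> \<int>" for n
    using dA A0 Aint by (rule fps_logderiv_nth_Ints)
  show ?thesis
  proof (cases k)
    case 0 then show ?thesis by (simp, intro Ints_sum Ints_of_nat)
  next
    case (Suc n)
    have "- (P $ n) = (\<Sum>z\<in>R. of_nat (order z f) * z ^ (n + 1))"
      by (simp add: P_def fps_sum_nth sum_negf)
    moreover have "- (P $ n) \<in> \<int>" using Pint by simp
    ultimately show ?thesis using Suc by (simp add: R_def)
  qed
qed

text \<open>
  Lagrange interpolation: with \<open>L\<close> vanishing on \<open>R - {g}\<close> but not at \<open>g\<close>, the coefficients of \<open>L\<close>
  combine weighted power sums into a multiple of \<open>g\<^sup>k\<close>.
\<close>
lemma power_in_span_power_sums:
  fixes R :: "complex set" and m :: "complex \<Rightarrow> nat"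
  assumes finR: "finite R" and gR: "g \<in> R" and mg: "m g > 0"
  shows "\<exists>c r. \<forall>k. g ^ k = (\<Sum>j<r. c j * (\<Sum>z\<in>R. of_nat (m z) * z ^ (k + j)))"
proof -
  define L where "L = (\<Prod>z\<in>R-{g}. [:-z, 1:])"
  have Lg: "poly L g \<noteq> 0" using finR by (simp add: L_def poly_prod)
  have Lz: "poly L z = 0" if "z \<in> R" "z \<noteq> g" for z
    using finR that by (simp add: L_def poly_prod prod_zero_iff)
  define r where "r = Suc (degree L)"
  define D where "D = of_nat (m g) * poly L g"
  have D0: "D \<noteq> 0" using Lg mg by (simp add: D_def)
  define c where "c j = coeff L j / D" for j
  have polyL: "poly L z = (\<Sum>j<r. coeff L j * z ^ j)" for z
    by (simp add: poly_altdef r_def lessThan_Suc_atMost)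
  have "(\<Sum>j<r. c j * (\<Sum>z\<in>R. of_nat (m z) * z ^ (k + j))) = g ^ k" for k
  proof -
    have "(\<Sum>j<r. c j * (\<Sum>z\<in>R. of_nat (m z) * z ^ (k + j)))
        = (\<Sum>z\<in>R. \<Sum>j<r. c j * (of_nat (m z) * z ^ (k + j)))"
      by (simp add: sum_distrib_left sum.swap[of _ R])
    also have "\<dots> = (\<Sum>z\<in>R. of_nat (m z) * z ^ k * poly L z / D)"
      by (intro sum.cong refl)
         (simp add: polyL sum_distrib_left sum_divide_distrib c_def power_add mult_ac)
    also have "\<dots> = of_nat (m g) * g ^ k * poly L g / D"
      using finR gR by (simp add: sum.remove Lz)
    finally show ?thesis using D0 by (simp add: D_def)
  qed
  then show ?thesis by metis
qed

lemma root_of_unity_if_finite_powers: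
  fixes g :: complex
  assumes "g \<noteq> 0" "finite (range (\<lambda>k::nat. g ^ k))"
  shows "\<exists>n>0. g ^ n = 1"
proof -
  have "\<not> inj (\<lambda>k::nat. g ^ k)"
    using assms(2) finite_imageD infinite_UNIV_nat by blast
  then obtain a b :: nat where ab: "a \<noteq> b" "g ^ a = g ^ b" unfolding inj_def by blast
  have *: "\<exists>n>0. g ^ n = 1" if "a < b" "g ^ a = g ^ b" for a b :: nat
  proof -
    have "g ^ b = g ^ a * g ^ (b - a)" using that(1) by (simp flip: power_add)
    then have "g ^ (b - a) = 1" using that(2) assms(1) by simp
    then show ?thesis using that(1) by (intro exI[of _ "b - a"]) simp
  qed
  show ?thesis using ab *[of a b] *[of b a] by (cases "a < b") auto
qed

lemma finite_range_if_sliding_combination: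
  fixes g :: "'a::comm_ring_1"
  assumes cr: "\<And>k. g ^ k = (\<Sum>j<r. c j * s (k + j))" and sV: "\<And>k. s k \<in> V" and "finite V"
  shows "finite (range (\<lambda>k::nat. g ^ k))"
proof -
  define F where "F xs = (\<Sum>j<r. c j * xs ! j)" for xs
  have "range (\<lambda>k::nat. g ^ k) \<subseteq> F ` {xs. set xs \<subseteq> V \<and> length xs = r}"
  proof
    fix y assume "y \<in> range (\<lambda>k::nat. g ^ k)"
    then obtain k where y: "y = g ^ k" by auto
    define xs where "xs = map (\<lambda>j. s (k + j)) [0..<r]"
    have "F xs = y" unfolding F_def xs_def y cr by (intro sum.cong) auto
    moreover have "set xs \<subseteq> V \<and> length xs = r" unfolding xs_def using sV by auto
    ultimately show "y \<in> F ` {xs. set xs \<subseteq> V \<and> length xs = r}" by blast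
  qed
  then show ?thesis
    by (rule finite_subset) (intro finite_imageI finite_lists_length_eq \<open>finite V\<close>)
qed

lemma power_sum_roots_bounded_Ints:
  fixes f :: "complex poly"
  assumes lead: "lead_coeff f = 1" and ints: "\<And>i. coeff f i \<in> \<int>"
    and disc: "\<And>z. poly f z = 0 \<Longrightarrow> norm z \<le> 1"
  defines "N \<equiv> int (\<Sum>z | poly f z = 0. order z f)"
  shows "(\<Sum>z | poly f z = 0. of_nat (order z f) * z ^ k) \<in> of_int ` {-N..N}"
proof -
  define s where "s = (\<Sum>z | poly f z = 0. of_nat (order z f) * z ^ k)"
  have "norm s \<le> (\<Sum>z | poly f z = 0. norm (of_nat (order z f) * z ^ k))"
    unfolding s_def by (rule norm_sum)
  also have "\<dots> \<le> (\<Sum>z | poly f z = 0. real (order z f))"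
  proof (rule sum_mono)
    fix z assume "z \<in> {z. poly f z = 0}"
    then have "norm z ^ k \<le> 1" using disc by (simp add: power_le_one)
    then show "norm (of_nat (order z f) * z ^ k) \<le> real (order z f)"
      by (simp add: norm_mult norm_power mult_left_le)
  qed
  finally have "norm s \<le> of_int N" by (simp add: N_def)
  moreover have "s \<in> \<int>" unfolding s_def using lead ints by (rule power_sum_roots_Ints)
  then obtain i where i: "s = of_int i" by (auto elim: Ints_cases)
  ultimately have "\<bar>i\<bar> \<le> N" by (simp flip: of_int_abs)
  then show ?thesis using i by (auto simp: s_def abs_le_iff)
qed

text \<open>
  The power sums of the roots are integers of modulus at most the degree, so they take finitely
  many values; by interpolation the same holds for the powers of each root.
\<close>
theorem kronecker_root_of_unity:
  fixes f :: "complex poly"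
  assumes lead: "lead_coeff f = 1" and ints: "\<And>i. coeff f i \<in> \<int>"
    and nz: "poly f 0 \<noteq> 0" and disc: "\<And>z. poly f z = 0 \<Longrightarrow> norm z \<le> 1"
    and root: "poly f g = 0"
  shows "\<exists>n>0. g ^ n = 1"
proof -
  define R where "R = {z. poly f z = 0}"
  define s where "s k = (\<Sum>z\<in>R. of_nat (order z f) * z ^ k)" for k
  have f0: "f \<noteq> 0" using lead by auto
  then have "finite R" unfolding R_def by (rule poly_roots_finite)
  moreover have "order g f > 0" using root f0 by (simp add: order_root)
  ultimately obtain c r where "\<And>k. g ^ k = (\<Sum>j<r. c j * s (k + j))"
    using power_in_span_power_sums[of R g "\<lambda>z. order z f"] root unfolding s_def R_def by auto
  moreover have "s k \<in> of_int ` {-int (\<Sum>z\<in>R. order z f)..int (\<Sum>z\<in>R. order z f)}" for k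
    unfolding s_def R_def using lead ints disc by (rule power_sum_roots_bounded_Ints)
  ultimately have "finite (range (\<lambda>k::nat. g ^ k))"
    by (rule finite_range_if_sliding_combination) simp
  moreover have "g \<noteq> 0" using root nz by auto
  ultimately show ?thesis using root_of_unity_if_finite_powers by blast
qed

lemma kronecker_poly_root_of_unity:
  fixes z :: complex
  assumes "kronecker_poly P" "poly P 0 \<noteq> 0" "poly (map_poly of_int P) z = 0"
  shows "\<exists>n>0. z ^ n = 1"
proof (rule kronecker_root_of_unity)
  show "lead_coeff (map_poly of_int P :: complex poly) = 1"
    using assms(1) by (simp add: kronecker_poly_def lead_coeff_map_poly_of_int)
  show "poly (map_poly of_int P :: complex poly) 0 \<noteq> 0"
    using assms(2) poly_map_poly_of_int_of_int[of P 0, where 'a = complex] by simp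
qed (use assms in \<open>auto simp: kronecker_poly_def coeff_map_poly\<close>)


section \<open>Gauss's lemma for monic factors\<close>

lemma rat_poly_clear_denominators:
  fixes M :: "rat poly"
  shows "\<exists>a::int. a > 0 \<and> (\<exists>A. smult (of_int a) M = map_poly of_int A)"
proof (induction M rule: pCons_induct)
  case 0 then show ?case by (intro exI[of _ 1]) (auto intro: exI[of _ 0])
next
  case (pCons c M)
  obtain a A where aA: "a > 0" "smult (of_int a) M = map_poly of_int A" using pCons.IH by blast
  obtain n q where nq: "quotient_of c = (n, q)" by (cases "quotient_of c")
  have c: "c = of_int n / of_int q" and q: "q > 0"
    using quotient_of_div[OF nq] quotient_of_denom_pos[OF nq] by auto
  have "smult (of_int (a * q)) (pCons c M) = pCons (of_int (a * n)) (smult (of_int q) (map_poly of_int A))"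
    using q by (simp add: c aA(2)[symmetric] field_simps)
  also have "\<dots> = map_poly of_int (pCons (a * n) (smult q A))"
    by (simp add: map_poly_of_int_pCons map_poly_of_int_smult)
  finally show ?case using aA q by (intro exI[of _ "a * q"]) auto
qed

lemma content_eq_1_if_monic: "lead_coeff (X :: int poly) = 1 \<Longrightarrow> Polynomial.content X = 1"
proof -
  assume "lead_coeff X = 1"
  then have "Polynomial.content X dvd 1" using content_dvd_coeff[of X "degree X"] by simp
  moreover have "Polynomial.content X \<ge> 0"
    using normalize_content[of X] by (metis abs_ge_zero normalize_int_def)
  ultimately show ?thesis by simp
qed

lemma content_pos_int: "(X :: int poly) \<noteq> 0 \<Longrightarrow> Polynomial.content X > 0"
  by (metis abs_ge_zero content_eq_zero_iff normalize_content normalize_int_def order_le_less)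

text \<open>
  Clearing denominators, \<open>a M = A\<close> and \<open>b H = B\<close> with \<open>A B = a b X\<close>; the contents of \<open>A\<close> and \<open>B\<close>
  divide \<open>a\<close> and \<open>b\<close> and multiply to \<open>a b\<close>, so \<open>a\<close> divides every coefficient of \<open>A\<close>.
\<close>
lemma monic_factor_of_monic_int_poly_Ints:
  fixes X :: "int poly" and M H :: "rat poly"
  assumes X: "lead_coeff X = 1" and M: "lead_coeff M = 1" and eq: "map_poly of_int X = M * H"
  shows "coeff M i \<in> \<int>"
proof -
  have "lead_coeff (map_poly of_int X :: rat poly) = 1" using X by (simp add: lead_coeff_map_poly_of_int)
  then have H: "lead_coeff H = 1" using M by (simp add: eq lead_coeff_mult)
  obtain a A where aA: "a > 0" "smult (of_int a) M = map_poly of_int A"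
    using rat_poly_clear_denominators by blast
  obtain b B where bB: "b > 0" "smult (of_int b) H = map_poly of_int B"
    using rat_poly_clear_denominators by blast
  have "map_poly of_int (A * B) = (map_poly of_int (smult (a * b) X) :: rat poly)"
    by (simp add: map_poly_of_int_mult map_poly_of_int_smult aA(2)[symmetric] bB(2)[symmetric]
                  eq mult_ac)
  then have AB: "A * B = smult (a * b) X" by (simp only: map_poly_of_int_eq_iff)
  have lead: "lead_coeff C = c"
    if "smult (of_int c) N = map_poly of_int C" "lead_coeff N = 1" for c C and N :: "rat poly"
  proof -
    have "(of_int (lead_coeff C) :: rat) = lead_coeff (map_poly of_int C)"
      by (simp add: lead_coeff_map_poly_of_int)
    also have "\<dots> = of_int c" by (simp add: that(1)[symmetric] lead_coeff_smult that(2))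
    finally show ?thesis by simp
  qed
  have lead_A: "lead_coeff A = a" and lead_B: "lead_coeff B = b"
    using lead[OF aA(2) M] lead[OF bB(2) H] .
  have content_AB: "Polynomial.content A * Polynomial.content B = a * b"
    using content_mult[of A B] AB content_smult[of "a * b" X] content_eq_1_if_monic[OF X] aA(1) bB(1)
    by (simp add: abs_mult)
  have "Polynomial.content A dvd a" "Polynomial.content B dvd b"
    using content_dvd_coeff[of A "degree A"] content_dvd_coeff[of B "degree B"] lead_A lead_B by simp_all
  then have "Polynomial.content A \<le> a" "Polynomial.content B \<le> b" using aA(1) bB(1) by (simp_all add: zdvd_imp_le)
  moreover have "Polynomial.content B > 0" using lead_B bB(1) by (intro content_pos_int) auto
  ultimately have "Polynomial.content A = a"
    using content_AB aA(1) by (smt (verit) mult_mono mult_strict_right_mono)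
  then have "a dvd coeff A i" using content_dvd_coeff[of A i] by simp
  then obtain t where t: "coeff A i = a * t" by (auto elim: dvdE)
  have "of_int a * coeff M i = of_int (coeff A i)"
    using arg_cong[OF aA(2), of "\<lambda>p. coeff p i"] by (simp add: coeff_map_poly)
  then have "coeff M i = of_int t" using aA(1) by (simp add: t)
  then show ?thesis by simp
qed

lemma rat_poly_eq_map_poly_of_int_floor:
  fixes M :: "rat poly"
  assumes "\<And>i. coeff M i \<in> \<int>"
  shows "M = map_poly of_int (map_poly floor M)"
  by (rule poly_eqI) (use assms in \<open>auto simp: coeff_map_poly elim!: Ints_cases\<close>)

text \<open>
  Division by a monic integer polynomial stays in \<open>\<int>[x]\<close>: compare the exact quotient with the
  pseudo-quotient, which for a monic divisor is the ordinary one.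
\<close>
lemma monic_dvd_of_int_poly:
  fixes A G :: "int poly" and Q :: "'a::field_char_0 poly"
  assumes G: "lead_coeff G = 1" and eq: "map_poly of_int A = map_poly of_int G * Q"
  shows "\<exists>Q'. Q = map_poly of_int Q' \<and> A = G * Q'"
proof -
  have G0: "G \<noteq> 0" using G by auto
  obtain q r where pd: "pseudo_divmod A G = (q, r)" by (cases "pseudo_divmod A G")
  have Aeq: "A = G * q + r" using pseudo_divmod(1)[OF G0 pd] G by simp
  have rdeg: "r = 0 \<or> degree r < degree G" using pseudo_divmod(2)[OF G0 pd] .
  have rem: "map_poly of_int G * (Q - map_poly of_int q) = (map_poly of_int r :: 'a poly)"
    using eq by (simp add: Aeq map_poly_of_int_add map_poly_of_int_mult algebra_simps)
  have "Q = map_poly of_int q"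
  proof (rule ccontr)
    assume ne: "Q \<noteq> map_poly of_int q"
    have G'0: "map_poly of_int G \<noteq> (0 :: 'a poly)" using G0 by (simp add: map_poly_of_int_eq_0_iff)
    then have "r \<noteq> 0 \<and> degree r \<ge> degree G"
      using ne rem degree_mult_eq[OF G'0, of "Q - map_poly of_int q"]
      by (auto simp: degree_map_poly_of_int map_poly_of_int_eq_0_iff)
    then show False using rdeg by simp
  qed
  moreover from this rem have "r = 0" by (simp add: map_poly_of_int_eq_0_iff)
  ultimately show ?thesis using Aeq by auto
qed


section \<open>Frobenius congruence for integer polynomials\<close>

lemma binomial_power_prime:
  fixes u v :: "'a::comm_ring_1"
  assumes p: "prime p"
  shows "\<exists>W. (u + v) ^ p = u ^ p + v ^ p + of_nat p * W"
proof -
  have p0: "p > 0" using p by (simp add: prime_gt_0_nat)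
  define W where "W = (\<Sum>k\<in>{0<..<p}. of_nat ((p choose k) div p) * u ^ k * v ^ (p - k))"
  have "(u + v) ^ p = (\<Sum>k\<le>p. of_nat (p choose k) * u ^ k * v ^ (p - k))"
    by (rule binomial_ring)
  also have "{..p} = insert 0 (insert p {0<..<p})" using p0 by auto
  also have "(\<Sum>k\<in>insert 0 (insert p {0<..<p}). of_nat (p choose k) * u ^ k * v ^ (p - k))
      = v ^ p + (u ^ p + (\<Sum>k\<in>{0<..<p}. of_nat (p choose k) * u ^ k * v ^ (p - k)))"
    using p0 by (simp add: sum.insert)
  also have "(\<Sum>k\<in>{0<..<p}. of_nat (p choose k) * u ^ k * v ^ (p - k)) = of_nat p * W"
  proof -
    have "of_nat (p choose k) = of_nat p * (of_nat ((p choose k) div p) :: 'a)" if "k \<in> {0<..<p}" for k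
    proof -
      have "p dvd p choose k" using that p by (intro dvd_choose_prime) auto
      then have "p choose k = p * ((p choose k) div p)" by simp
      then show ?thesis by (metis of_nat_mult)
    qed
    then show ?thesis unfolding W_def sum_distrib_left by (intro sum.cong) (auto simp: mult_ac)
  qed
  finally show ?thesis by (intro exI[of _ W]) (simp add: algebra_simps)
qed

lemma fermat_little_int:
  assumes p: "prime p"
  shows "int p dvd a ^ p - a"
proof -
  have nat_case: "int p dvd int b ^ p - int b" for b
  proof (induction b)
    case 0 then show ?case using p by (simp add: prime_gt_0_nat power_0_left)
  next
    case (Suc b)
    obtain W where "(1 + int b) ^ p = 1 ^ p + int b ^ p + of_nat p * W"
      using binomial_power_prime[OF p] by blast
    then have "int (Suc b) ^ p - int (Suc b) = (int b ^ p - int b) + int p * W" by simp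
    then show ?case by (simp only:) (intro dvd_add Suc.IH dvd_triv_left)
  qed
  have "int p > 0" using p by (simp add: prime_gt_0_nat)
  then have "int p dvd (a mod int p) ^ p - a mod int p"
    using nat_case[of "nat (a mod int p)"] by simp
  then have "(a mod int p) ^ p mod int p = a mod int p mod int p" by (simp only: mod_eq_dvd_iff)
  then show ?thesis by (simp add: power_mod mod_eq_dvd_iff)
qed

lemma frobenius_int_poly:
  fixes H :: "int poly"
  assumes p: "prime p"
  shows "\<exists>T. H ^ p = pcompose H (monom 1 p) + of_nat p * T"
proof (induction H rule: pCons_induct)
  case 0 then show ?case using p by (intro exI[of _ 0]) (simp add: prime_gt_0_nat)
next
  case (pCons a q)
  obtain T where T: "q ^ p = pcompose q (monom 1 p) + of_nat p * T" using pCons.IH by blast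
  obtain W where W: "([:a:] + monom 1 1 * q) ^ p = [:a:] ^ p + (monom 1 1 * q) ^ p + of_nat p * W"
    using binomial_power_prime[OF p] by blast
  obtain t where t: "a ^ p - a = int p * t" using fermat_little_int[OF p, of a] by (auto elim: dvdE)
  have const: "[:a:] ^ p = [:a:] + of_nat p * [:t:]"
    using t by (simp add: poly_const_pow of_nat_poly algebra_simps)
  have pCons_eq: "pCons a q = [:a:] + monom 1 1 * q"
    by (rule poly_eqI) (simp add: coeff_pCons coeff_monom_mult split: nat.splits)
  have "pCons a q ^ p =
          [:a:] + monom 1 p * pcompose q (monom 1 p) + of_nat p * ([:t:] + monom 1 p * T + W)"
    unfolding pCons_eq W const power_mult_distrib monom_power T by (simp add: algebra_simps)
  also have "[:a:] + monom 1 p * pcompose q (monom 1 p) = pcompose (pCons a q) (monom 1 p)"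
    by (simp add: pcompose_pCons)
  finally show ?case by blast
qed

text \<open>Look at the highest coefficient of \<open>Q\<close> not divisible by \<open>c\<close>.\<close>
lemma dvd_coeff_of_dvd_coeff_monic_mult:
  fixes G Q :: "'a::comm_ring_1 poly"
  assumes lead: "lead_coeff G = 1" and degG: "degree G \<ge> 1"
    and dv: "\<And>i. i \<ge> 1 \<Longrightarrow> c dvd coeff (G * Q) i"
  shows "c dvd coeff Q j"
proof (rule ccontr)
  assume nj: "\<not> c dvd coeff Q j"
  define S where "S = {j. \<not> c dvd coeff Q j}"
  have finS: "finite S"
    by (rule finite_subset[of _ "{..degree Q}"]) (auto simp: S_def intro: le_degree)
  define m where "m = Max S"
  have mS: "m \<in> S" unfolding m_def using finS nj by (intro Max_in) (auto simp: S_def)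
  have above: "c dvd coeff Q k" if "k > m" for k
  proof (rule ccontr)
    assume "\<not> c dvd coeff Q k"
    then have "k \<le> m" unfolding m_def using finS by (simp add: S_def)
    then show False using that by simp
  qed
  define n where "n = degree G + m"
  have "coeff (G * Q) n = coeff G (degree G) * coeff Q (n - degree G) +
      (\<Sum>i\<in>{..n}-{degree G}. coeff G i * coeff Q (n - i))"
    unfolding coeff_mult by (subst sum.remove[of _ "degree G"]) (auto simp: n_def)
  then have eq: "coeff (G * Q) n = coeff Q m + (\<Sum>i\<in>{..n}-{degree G}. coeff G i * coeff Q (n - i))"
    using lead by (simp add: n_def)
  have "c dvd (\<Sum>i\<in>{..n}-{degree G}. coeff G i * coeff Q (n - i))"
  proof (rule dvd_sum)
    fix i assume "i \<in> {..n}-{degree G}"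
    then show "c dvd coeff G i * coeff Q (n - i)"
      using above[of "n - i"] by (cases "i < degree G") (auto simp: n_def coeff_eq_0)
  qed
  moreover have "c dvd coeff (G * Q) n" using degG by (intro dv) (simp add: n_def)
  ultimately have "c dvd coeff Q m" using eq by (simp add: dvd_add_left_iff)
  then show False using mS by (simp add: S_def)
qed


section \<open>Multiplicities at powers of a root of unity\<close>

lemma rat_minimal_polynomial_exists:
  fixes \<eta> :: "'a::field_char_0"
  assumes "q \<noteq> 0" "poly (map_poly of_rat q) \<eta> = 0"
  obtains M :: "rat poly" where "lead_coeff M = 1" "poly (map_poly of_rat M) \<eta> = 0"
    "\<And>h. poly (map_poly of_rat h) \<eta> = 0 \<Longrightarrow> M dvd h"
proof -
  define monic_root where
    "monic_root n \<longleftrightarrow> (\<exists>M. lead_coeff M = 1 \<and> degree M = n \<and> poly (map_poly of_rat M) \<eta> = 0)" for n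
  have normalize: "monic_root (degree r)" if "r \<noteq> 0" "poly (map_poly of_rat r) \<eta> = 0" for r
    using that unfolding monic_root_def
    by (intro exI[of _ "smult (inverse (lead_coeff r)) r"]) (simp add: map_poly_of_rat_smult)
  define n0 where "n0 = (LEAST n. monic_root n)"
  have "monic_root n0" unfolding n0_def using normalize[OF assms] by (rule LeastI)
  then obtain M where M: "lead_coeff M = 1" "degree M = n0" "poly (map_poly of_rat M) \<eta> = 0"
    unfolding monic_root_def by blast
  have "M dvd h" if h: "poly (map_poly of_rat h) \<eta> = 0" for h
  proof -
    define r where "r = h mod M"
    have "h = h div M * M + r" by (simp add: r_def)
    then have "map_poly of_rat h =
        map_poly of_rat (h div M) * map_poly of_rat M + (map_poly of_rat r :: 'a poly)"
      by (metis map_poly_of_rat_add map_poly_of_rat_mult)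
    then have root: "poly (map_poly of_rat r) \<eta> = 0" using h M(3) by simp
    have "r = 0"
    proof (rule ccontr)
      assume "r \<noteq> 0"
      moreover have "M \<noteq> 0" using M(1) by auto
      ultimately have "degree r < n0" using degree_mod_less'[of M h] M(2) by (simp add: r_def)
      then show False using Least_le[of monic_root "degree r"] normalize[OF \<open>r \<noteq> 0\<close> root]
        by (simp add: n0_def)
    qed
    then show ?thesis by (simp add: r_def mod_eq_0_iff_dvd)
  qed
  then show ?thesis using that M by blast
qed

text \<open>Gauss's lemma makes the minimal polynomial of an algebraic integer integral.\<close>
lemma algebraic_integer_minimal_polynomial_exists:
  fixes \<eta> :: "'a::field_char_0"
  assumes X: "lead_coeff X = 1" "poly (map_poly of_int X) \<eta> = 0"
  obtains G :: "int poly" where "lead_coeff G = 1" "degree G \<ge> 1" "poly (map_poly of_int G) \<eta> = 0"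
    "\<And>h. poly (map_poly of_int h) \<eta> = 0 \<Longrightarrow> G dvd h"
proof -
  have "map_poly of_int X \<noteq> (0 :: rat poly)" using X(1) by (auto simp: map_poly_of_int_eq_0_iff)
  then obtain M where M: "lead_coeff M = 1" "poly (map_poly of_rat M) \<eta> = 0"
      "\<And>h. poly (map_poly of_rat h) \<eta> = 0 \<Longrightarrow> M dvd h"
    using rat_minimal_polynomial_exists[of "map_poly of_int X" \<eta>] X(2)
    by (auto simp: map_poly_of_rat_of_int)
  have "M dvd map_poly of_int X" using M(3)[of "map_poly of_int X"] X(2) by (simp add: map_poly_of_rat_of_int)
  then obtain H where "map_poly of_int X = M * H" by (elim dvdE)
  define G where "G = map_poly floor M"
  have MG: "M = map_poly of_int G" unfolding G_def
    by (rule rat_poly_eq_map_poly_of_int_floor monic_factor_of_monic_int_poly_Ints[OF X(1) M(1)])+ fact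
  have G: "lead_coeff G = 1" "poly (map_poly of_int G) \<eta> = 0"
    using M(1,2) MG lead_coeff_map_poly_of_int[of G, where 'a = rat]
    by (simp_all add: map_poly_of_rat_of_int)
  moreover have "degree G \<ge> 1"
  proof (rule ccontr)
    assume "\<not> degree G \<ge> 1"
    then have "G = [:lead_coeff G:]" by (metis degree_eq_zeroE coeff_pCons_0 less_one not_le)
    then have "G = 1" using G(1) by simp
    then show False using G(2) by simp
  qed
  moreover have "G dvd h" if h: "poly (map_poly of_int h) \<eta> = 0" for h
  proof -
    have "M dvd map_poly of_int h" using M(3)[of "map_poly of_int h"] h by (simp add: map_poly_of_rat_of_int)
    then obtain Q where "map_poly of_int h = M * Q" by (elim dvdE)
    then have "map_poly of_int h = map_poly of_int G * Q" by (simp add: MG)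
    from monic_dvd_of_int_poly[OF G(1) this] show ?thesis by (auto intro: dvdI)
  qed
  ultimately show ?thesis using that by blast
qed

text \<open>By the Frobenius congruence \<open>H\<^sup>p \<equiv> H(x\<^sup>p) (mod p)\<close>.\<close>
lemma poly_power_prime_eq_multiple:
  fixes \<eta> :: "'a::comm_ring_1"
  assumes "prime p" "poly (map_poly of_int H) (\<eta> ^ p) = 0"
  obtains T where "poly (map_poly of_int H) \<eta> ^ p = of_nat p * poly (map_poly of_int T) \<eta>"
proof -
  obtain T where T: "H ^ p = pcompose H (monom 1 p) + of_nat p * T"
    using frobenius_int_poly[OF assms(1)] by blast
  have "poly (map_poly of_int H) \<eta> ^ p = poly (map_poly of_int (H ^ p)) \<eta>"
    by (simp add: map_poly_of_int_power)
  also have "\<dots> = poly (map_poly of_int H) (\<eta> ^ p) + of_nat p * poly (map_poly of_int T) \<eta>"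
    by (simp add: T map_poly_of_int_add map_poly_of_int_mult map_poly_of_int_of_nat
                  map_poly_of_int_pcompose map_poly_of_int_monom poly_pcompose poly_monom)
  finally show ?thesis using assms(2) that by simp
qed

text \<open>An integer in \<open>m \<int>[\<eta>]\<close> is a multiple of \<open>m\<close>: compare constant coefficients modulo \<open>G\<close>.\<close>
lemma dvd_of_eq_multiple_at_root:
  fixes G S :: "int poly" and \<eta> :: "'a::field_char_0"
  assumes G: "lead_coeff G = 1" "degree G \<ge> 1"
    and G_dvd: "\<And>h. poly (map_poly of_int h) \<eta> = 0 \<Longrightarrow> G dvd h"
    and eq: "of_int c = of_int m * poly (map_poly of_int S) \<eta>"
  shows "m dvd c"
proof -
  have "poly (map_poly of_int (smult m S - [:c:])) \<eta> = 0"
    using eq by (simp add: map_poly_of_int_diff map_poly_of_int_smult map_poly_of_int_const)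
  then obtain Q where Q: "smult m S - [:c:] = G * Q" using G_dvd by (auto elim: dvdE)
  have "m dvd coeff Q 0"
    by (rule dvd_coeff_of_dvd_coeff_monic_mult[OF G]) (simp add: Q[symmetric] coeff_pCons split: nat.splits)
  then have "m dvd coeff (smult m S - [:c:]) 0" by (simp add: Q coeff_mult_0)
  then show ?thesis by (simp add: dvd_diff_right_iff)
qed

text \<open>
  Dedekind's argument. Let \<open>G\<close> be the minimal polynomial of \<open>\<eta>\<close> and \<open>x\<^sup>d - 1 = G H\<close>. If
  \<open>G(\<eta>\<^sup>p) \<noteq> 0\<close> then \<open>H(\<eta>\<^sup>p) = 0\<close>, so \<open>H(\<eta>)\<^sup>p \<in> p \<int>[\<eta>]\<close>; differentiating \<open>x\<^sup>d - 1 = G H\<close> at \<open>\<eta>\<close>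
  gives \<open>d \<eta>\<^sup>d\<^sup>-\<^sup>1 = H(\<eta>) G'(\<eta>)\<close>, hence \<open>d\<^sup>p \<in> p \<int>[\<eta>]\<close> and \<open>p dvd d\<close>.
\<close>
lemma poly_root_power_prime:
  fixes \<eta> :: complex and d p :: nat and f :: "int poly"
  assumes d: "d > 0" "\<eta> ^ d = 1" and p: "prime p" "\<not> p dvd d"
    and f: "poly (map_poly of_int f) \<eta> = 0"
  shows "poly (map_poly of_int f) (\<eta> ^ p) = 0"
proof -
  define X :: "int poly" where "X = monom 1 d - 1"
  have polyX: "poly (map_poly of_int X) z = z ^ d - 1" for z :: complex
    by (simp add: X_def map_poly_of_int_diff map_poly_of_int_monom poly_monom)
  have "lead_coeff X = 1" unfolding X_def using d(1) by (rule lead_coeff_monom_minus_1)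
  then obtain G where G: "lead_coeff G = 1" "degree G \<ge> 1" "poly (map_poly of_int G) \<eta> = 0"
      and G_dvd: "\<And>h. poly (map_poly of_int h) \<eta> = 0 \<Longrightarrow> G dvd h"
    using algebraic_integer_minimal_polynomial_exists[of X \<eta>] polyX d(2) by auto
  obtain H where XGH: "X = G * H" using G_dvd[of X] polyX d(2) by (auto elim: dvdE)
  have "poly (map_poly of_int G) (\<eta> ^ p) = 0"
  proof (rule ccontr)
    assume "poly (map_poly of_int G) (\<eta> ^ p) \<noteq> 0"
    moreover have "(\<eta> ^ p) ^ d = (\<eta> ^ d) ^ p" by (simp flip: power_mult add: mult.commute)
    then have "(\<eta> ^ p) ^ d = 1" using d(2) by simp
    ultimately have "poly (map_poly of_int H) (\<eta> ^ p) = 0"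
      using XGH polyX[of "\<eta> ^ p"] by (simp add: map_poly_of_int_mult)
    then obtain T where T: "poly (map_poly of_int H) \<eta> ^ p = of_nat p * poly (map_poly of_int T) \<eta>"
      using poly_power_prime_eq_multiple[OF p(1)] by blast
    have "pderiv X = monom (of_nat d) (d - 1)" by (simp add: X_def pderiv_diff pderiv_monom)
    then have "of_nat d * \<eta> ^ (d - 1) = poly (map_poly of_int (pderiv (G * H))) \<eta>"
      by (simp add: XGH map_poly_of_int_monom poly_monom)
    also have "\<dots> = poly (map_poly of_int H) \<eta> * poly (map_poly of_int (pderiv G)) \<eta>"
      using G(3) by (simp add: pderiv_mult map_poly_of_int_add map_poly_of_int_mult)
    finally have deriv: "of_nat d * \<eta> ^ (d - 1) = \<dots>" .
    have "\<eta> ^ (d - 1) * \<eta> = 1" using d by (simp flip: power_Suc2)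
    then have "of_nat d ^ p = (of_nat d * \<eta> ^ (d - 1)) ^ p * \<eta> ^ p"
      by (simp add: power_mult_distrib flip: mult.assoc) (simp add: mult.assoc flip: power_mult_distrib)
    also have "\<dots> = of_nat p * poly (map_poly of_int (T * pderiv G ^ p * monom 1 p)) \<eta>"
      by (simp only: deriv power_mult_distrib T)
         (simp add: map_poly_of_int_mult map_poly_of_int_power map_poly_of_int_monom poly_monom)
    finally have "of_int (int d ^ p) =
        of_int (int p) * poly (map_poly of_int (T * pderiv G ^ p * monom 1 p)) \<eta>"
      by simp
    then have "int p dvd int d ^ p" using dvd_of_eq_multiple_at_root[OF G(1,2) G_dvd] by blast
    then have "p dvd d" using p(1) prime_dvd_power by (metis of_nat_power int_dvd_int_iff)
    then show False using p(2) by simp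
  qed
  moreover obtain Q where "f = G * Q" using G_dvd[OF f] by (elim dvdE)
  ultimately show ?thesis by (simp add: map_poly_of_int_mult)
qed

lemma order_le_order_root_power_prime:
  fixes \<eta> :: complex and d p :: nat and f :: "int poly"
  assumes d: "d > 0" "\<eta> ^ d = 1" and p: "prime p" "\<not> p dvd d" and f0: "f \<noteq> 0"
  shows "order \<eta> (map_poly of_int f :: complex poly) \<le> order (\<eta> ^ p) (map_poly of_int f)"
  using f0
proof (induction "order \<eta> (map_poly of_int f :: complex poly)" arbitrary: f)
  case (Suc n)
  have F0: "map_poly of_int f \<noteq> (0::complex poly)" using Suc.prems by (simp add: map_poly_of_int_eq_0_iff)
  have r1: "poly (map_poly of_int f) \<eta> = 0" using Suc.hyps(2) F0 order_root by (metis Zero_not_Suc)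
  have r2: "poly (map_poly of_int f) (\<eta> ^ p) = 0" by (rule poly_root_power_prime[OF d p r1])
  have pd0: "pderiv f \<noteq> 0"
  proof
    assume "pderiv f = 0"
    then have "degree f = 0" by (simp add: pderiv_eq_0_iff)
    then obtain c where "f = [:c:]" by (elim degree_eq_zeroE)
    then show False using Suc.prems r1 by (simp add: map_poly_of_int_const)
  qed
  have "n = order \<eta> (map_poly of_int (pderiv f) :: complex poly)"
    using Suc.hyps(2) order_pderiv[OF F0 r1] by (simp add: map_poly_of_int_pderiv)
  from Suc.hyps(1)[OF this pd0] show ?case using order_pderiv[OF F0 r1] order_pderiv[OF F0 r2]
    by (simp add: map_poly_of_int_pderiv)
qed simp

lemma order_le_order_root_power_coprime:
  fixes \<eta> :: complex and f :: "int poly" and d k :: nat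
  assumes d: "d > 0" "\<eta> ^ d = 1" and k: "coprime k d" and f0: "f \<noteq> 0"
  shows "order \<eta> (map_poly of_int f :: complex poly) \<le> order (\<eta> ^ k) (map_poly of_int f)"
  using k
proof (induction k rule: less_induct)
  case (less k)
  show ?case
  proof (cases "k \<le> 1")
    case True
    then show ?thesis using less.prems d by (auto simp: le_Suc_eq)
  next
    case False
    then obtain q where q: "prime q" "q dvd k" using prime_factor_nat[of k] by auto
    then obtain k' where k: "k = q * k'" by (elim dvdE)
    have "k' > 0" using False k by (cases k') auto
    then have "k' < k" using k prime_gt_1_nat[OF q(1)] by simp
    have cop': "coprime k' d" and "coprime q d" using less.prems k by simp_all
    then have "\<not> q dvd d" using q(1) by (metis coprime_absorb_left not_prime_unit)
    have "(\<eta> ^ k') ^ d = (\<eta> ^ d) ^ k'" by (simp flip: power_mult add: mult.commute)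
    then have "(\<eta> ^ k') ^ d = 1" using d by simp
    then have "order (\<eta> ^ k') (map_poly of_int f :: complex poly) \<le> order ((\<eta> ^ k') ^ q) (map_poly of_int f)"
      using order_le_order_root_power_prime d(1) q(1) \<open>\<not> q dvd d\<close> f0 by blast
    then show ?thesis using less.IH[OF \<open>k' < k\<close> cop'] k by (simp flip: power_mult add: mult.commute)
  qed
qed


section \<open>Roots of unity and cyclotomic polynomials\<close>

definition unit_root :: "nat \<Rightarrow> nat \<Rightarrow> complex" where
  "unit_root d k = cis (2 * pi * real k / real d)"

definition primitive_roots :: "nat \<Rightarrow> complex set" where
  "primitive_roots d = unit_root d ` totatives d"

lemma unit_root_eq_exp: "unit_root d k = exp (2 * of_real pi * \<i> * of_nat k / of_nat d)"
  by (simp add: unit_root_def cis_conv_exp mult_ac)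

lemma unit_root_eq_1_iff: "d > 0 \<Longrightarrow> unit_root d k = 1 \<longleftrightarrow> d dvd k"
  unfolding unit_root_eq_exp by (rule complex_root_unity_eq_1) simp

lemma unit_root_eq_iff: "d > 0 \<Longrightarrow> unit_root d j = unit_root d k \<longleftrightarrow> j mod d = k mod d"
  unfolding unit_root_eq_exp by (rule complex_root_unity_eq) simp

lemma unit_root_power: "unit_root d k ^ m = unit_root d (k * m)"
proof -
  have "unit_root d k ^ m = cis (real m * (2 * pi * real k / real d))"
    unfolding unit_root_def by (rule Complex.DeMoivre)
  then show ?thesis by (simp add: unit_root_def mult_ac)
qed

lemma unit_root_power_order: "d > 0 \<Longrightarrow> unit_root d k ^ d = 1"
  by (simp add: unit_root_power unit_root_eq_1_iff)

lemma unit_root_1_in_primitive_roots: "d > 0 \<Longrightarrow> unit_root d 1 \<in> primitive_roots d"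
  by (simp add: primitive_roots_def)

lemma primitive_roots_1: "primitive_roots 1 = {1}"
  by (simp add: primitive_roots_def unit_root_def)

lemma root_of_unity_eq_unit_root:
  fixes z :: complex
  assumes "z ^ N = 1" "N > 0"
  obtains j where "j < N" "z = unit_root N j"
proof -
  have "z \<in> {z::complex. z ^ N = 1}" using assms by simp
  also have "\<dots> = {exp (2 * of_real pi * \<i> * of_nat j / of_nat N) | j. j < N}"
    using assms by (intro complex_roots_unity) simp
  finally show ?thesis using that by (auto simp: unit_root_eq_exp)
qed

lemma root_of_unity_in_primitive_roots:
  fixes z :: complex
  assumes "z ^ N = 1" "N > 0"
  obtains d where "d > 0" "z \<in> primitive_roots d"
proof -
  obtain j where j: "j < N" "z = unit_root N j" using root_of_unity_eq_unit_root[OF assms] .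
  show ?thesis
  proof (cases "j = 0")
    case True
    then have "z = 1" using j by (simp add: unit_root_def)
    then show ?thesis using that[of 1] primitive_roots_1 by simp
  next
    case False
    define g where "g = gcd j N"
    have g0: "g > 0" using False by (simp add: g_def)
    have cop: "coprime (j div g) (N div g)" unfolding g_def using False by (intro div_gcd_coprime) simp
    have "g dvd j" "g dvd N" by (simp_all add: g_def)
    then obtain j' N' where jN: "j = g * j'" "N = g * N'" by (elim dvdE)
    have "coprime j' N'" using cop g0 unfolding jN by simp
    moreover have "0 < j'" "N' > 0" using False assms(2) jN by simp_all
    moreover have "j' \<le> N'" using j(1) g0 unfolding jN by simp
    moreover have "real j / real N = real j' / real N'" using g0 \<open>N' > 0\<close> unfolding jN by simp
    then have "z = unit_root N' j'" using j(2) by (simp add: unit_root_def flip: times_divide_eq_right)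
    ultimately have "z \<in> primitive_roots N'" "N' > 0" by (auto simp: primitive_roots_def in_totatives_iff)
    then show ?thesis using that by blast
  qed
qed

lemma primitive_roots_disjoint:
  assumes "d > 0" "d' > 0" "z \<in> primitive_roots d" "z \<in> primitive_roots d'"
  shows "d = d'"
proof -
  have dvd: "d dvd d'" if d: "d > 0" "d' > 0"
    and z: "z \<in> primitive_roots d" and z': "z \<in> primitive_roots d'" for d d'
  proof -
    obtain k where k: "k \<in> totatives d" "z = unit_root d k"
      using z by (auto simp: primitive_roots_def)
    obtain k' where k': "k' \<in> totatives d'" "z = unit_root d' k'"
      using z' by (auto simp: primitive_roots_def)
    have "unit_root d (k * d') = unit_root d k ^ d'" by (simp add: unit_root_power)
    also have "\<dots> = unit_root d' k' ^ d'" using k(2) k'(2) by simp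
    also have "\<dots> = 1" using d(2) by (rule unit_root_power_order)
    finally have "d dvd k * d'" using d(1) by (simp add: unit_root_eq_1_iff)
    then show "d dvd d'"
      using k(1) coprime_dvd_mult_right_iff[of d k d'] by (simp add: in_totatives_iff coprime_commute)
  qed
  show ?thesis using dvd[OF assms] dvd[OF assms(2,1,4,3)] by (rule dvd_antisym)
qed

lemma inj_on_unit_root: "d > 0 \<Longrightarrow> inj_on (unit_root d) (totatives d)"
  by (rule inj_onI) (auto simp: unit_root_eq_iff in_totatives_iff le_less mod_if)

lemma cyclo_eq_prod_primitive_roots: "d > 0 \<Longrightarrow> cyclo d = (\<Prod>z\<in>primitive_roots d. [:-z, 1:])"
proof -
  assume d: "d > 0"
  have "cyclo d = (\<Prod>k\<in>totatives d. [:- unit_root d k, 1:])"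
    unfolding cyclo_def unit_root_def by (rule prod.cong) (auto simp: in_totatives_iff)
  then show ?thesis
    unfolding primitive_roots_def by (simp add: prod.reindex[OF inj_on_unit_root[OF d]])
qed

lemma order_monom_minus_1:
  assumes p: "p > 0"
  shows "order z (monom (1::complex) p - 1) = (if z ^ p = 1 then 1 else 0)"
proof (cases "z ^ p = 1")
  case True
  have nz: "monom (1::complex) p - 1 \<noteq> 0"
    using lead_coeff_monom_minus_1[OF p] by (metis leading_coeff_0_iff zero_neq_one)
  have root: "poly (monom (1::complex) p - 1) z = 0" using True by (simp add: poly_monom)
  have "z \<noteq> 0" using True p by (auto simp: power_0_left)
  then have "order z (pderiv (monom (1::complex) p - 1)) = 0"
    using p by (intro order_0I) (simp add: pderiv_diff pderiv_monom poly_monom)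
  then show ?thesis using order_pderiv[OF nz root] True by simp
qed (simp add: order_0I poly_monom)

lemma lead_coeff_cyclo: "lead_coeff (cyclo d) = 1"
  unfolding cyclo_def by (subst lead_coeff_prod) simp

lemma cyclo_neq_0: "cyclo d \<noteq> 0"
  using lead_coeff_cyclo[of d] by auto

lemma order_prod_linear:
  fixes A :: "complex set"
  assumes "finite A"
  shows "order z (\<Prod>a\<in>A. [:-a, 1:]) = (if z \<in> A then 1 else 0)"
  using assms
proof (induction A rule: finite_induct)
  case empty then show ?case by (simp add: order_0I)
next
  case (insert x F)
  have "(\<Prod>a\<in>F. [:-a, 1:]) \<noteq> (0 :: complex poly)"
    using insert.hyps(1) by (simp add: prod_zero_iff)
  then have nz: "[:-x, 1:] * (\<Prod>a\<in>F. [:-a, 1:]) \<noteq> 0"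
    by (metis mult_eq_0_iff pCons_eq_0_iff zero_neq_one)
  have "order z [:-x, 1:] = (if z = x then 1 else 0)"
    using order_power_n_n[of x 1] by (auto intro: order_0I)
  then have "order z (\<Prod>a\<in>insert x F. [:-a, 1:]) =
      (if z = x then 1 else 0) + (if z \<in> F then 1 else 0)"
    using insert order_mult[OF nz] by simp
  then show ?case using insert.hyps(2) by auto
qed

lemma order_cyclo: "d > 0 \<Longrightarrow> order z (cyclo d) = (if z \<in> primitive_roots d then 1 else 0)"
  by (simp add: cyclo_eq_prod_primitive_roots order_prod_linear primitive_roots_def)

lemma order_power: "p \<noteq> 0 \<Longrightarrow> order z (p ^ n) = n * order z p"
  by (induction n) (simp_all add: order_mult)

lemma order_prod_power:
  assumes "finite D" "\<And>d. d \<in> D \<Longrightarrow> Q d \<noteq> (0::complex poly)"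
  shows "order z (\<Prod>d\<in>D. Q d ^ e d) = (\<Sum>d\<in>D. e d * order z (Q d))"
  using assms
proof (induction D rule: finite_induct)
  case (insert x F)
  have nz: "Q x ^ e x * (\<Prod>d\<in>F. Q d ^ e d) \<noteq> 0" using insert by (simp add: prod_zero_iff)
  then show ?case using insert by (simp add: order_mult[OF nz] order_power)
qed simp

lemma monic_poly_eqI_order:
  fixes P Q :: "complex poly"
  assumes "lead_coeff P = 1" "lead_coeff Q = 1" "\<And>z. order z P = order z Q"
  shows "P = Q"
proof -
  have "{z. poly P z = 0} = {z. poly Q z = 0}"
    using assms by (auto simp: order_root)
  then show ?thesis
    using complex_poly_decompose[of P] complex_poly_decompose[of Q] assms by simp
qed

lemma finite_orders_of_unit_root_zeros:
  assumes "f \<noteq> 0"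
  shows "finite {d. d > 0 \<and> poly f (unit_root d 1) = 0}" (is "finite ?D")
proof -
  have "inj_on (\<lambda>d. unit_root d 1) ?D"
  proof (rule inj_onI)
    fix d d' assume "d \<in> ?D" "d' \<in> ?D" "unit_root d 1 = unit_root d' 1"
    then show "d = d'"
      using unit_root_1_in_primitive_roots[of d] unit_root_1_in_primitive_roots[of d']
      by (intro primitive_roots_disjoint[of d d' "unit_root d 1"]) auto
  qed
  moreover have "(\<lambda>d. unit_root d 1) ` ?D \<subseteq> {z. poly f z = 0}" by auto
  then have "finite ((\<lambda>d. unit_root d 1) ` ?D)" using poly_roots_finite[OF assms] by (rule finite_subset)
  ultimately show ?thesis using finite_imageD by blast
qed

lemma order_prod_cyclo_power:
  assumes "finite D" "\<And>d. d \<in> D \<Longrightarrow> d > 0"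
  shows "order z (\<Prod>d\<in>D. cyclo d ^ e d) = (\<Sum>d\<in>D. if z \<in> primitive_roots d then e d else 0)"
proof -
  have "order z (\<Prod>d\<in>D. cyclo d ^ e d) = (\<Sum>d\<in>D. e d * order z (cyclo d))"
    using assms(1) cyclo_neq_0 by (rule order_prod_power)
  also have "\<dots> = (\<Sum>d\<in>D. if z \<in> primitive_roots d then e d else 0)"
    using assms(2) by (intro sum.cong refl) (simp add: order_cyclo)
  finally show ?thesis .
qed

lemma poly_eq_prod_cyclo:
  fixes f :: "complex poly"
  assumes monic: "lead_coeff f = 1"
    and roots: "\<And>z. poly f z = 0 \<Longrightarrow> \<exists>n>0. z ^ n = 1"
    and const: "\<And>d z. d > 0 \<Longrightarrow> z \<in> primitive_roots d \<Longrightarrow> order z f = order (unit_root d 1) f"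
  defines "D \<equiv> {d. d > 0 \<and> poly f (unit_root d 1) = 0}"
  shows "f = (\<Prod>d\<in>D. cyclo d ^ order (unit_root d 1) f)"
proof (rule monic_poly_eqI_order[OF monic])
  have f0: "f \<noteq> 0" using monic by auto
  have finD: "finite D" unfolding D_def using f0 by (rule finite_orders_of_unit_root_zeros)
  show "lead_coeff (\<Prod>d\<in>D. cyclo d ^ order (unit_root d 1) f) = 1"
    by (simp add: lead_coeff_prod lead_coeff_power lead_coeff_cyclo)
  fix z
  have "order z (\<Prod>d\<in>D. cyclo d ^ order (unit_root d 1) f) =
      (\<Sum>d\<in>D. if z \<in> primitive_roots d then order (unit_root d 1) f else 0)"
    using finD by (rule order_prod_cyclo_power) (simp add: D_def)
  also have "\<dots> = order z f"
  proof (cases "\<exists>d>0. z \<in> primitive_roots d")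
    case True
    then obtain d0 where d0: "d0 > 0" "z \<in> primitive_roots d0" by blast
    have "(\<Sum>d\<in>D. if z \<in> primitive_roots d then order (unit_root d 1) f else 0) =
        (\<Sum>d\<in>D. if d = d0 then order (unit_root d 1) f else 0)"
      using d0 by (intro sum.cong) (auto simp: D_def dest: primitive_roots_disjoint)
    also have "\<dots> = order (unit_root d0 1) f"
      using finD d0(1) f0 by (auto simp: D_def order_root)
    finally show ?thesis using const[OF d0] by simp
  next
    case False
    then have "\<not> poly f z = 0" using roots root_of_unity_in_primitive_roots by metis
    moreover have "z \<notin> primitive_roots d" if "d \<in> D" for d
    proof -
      have "d > 0" using that by (simp add: D_def)
      then show ?thesis using False by blast
    qed
    ultimately show ?thesis by (simp add: order_0I)
  qed
  finally show "order z f = order z (\<Prod>d\<in>D. cyclo d ^ order (unit_root d 1) f)" ..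
qed

lemma order_primitive_root_eq:
  fixes f :: "int poly"
  assumes f0: "f \<noteq> 0" and d: "d > 0" and z: "z \<in> primitive_roots d"
  shows "order z (map_poly of_int f :: complex poly) = order (unit_root d 1) (map_poly of_int f)"
proof -
  define \<eta> where "\<eta> = unit_root d 1"
  obtain k where k: "k \<in> totatives d" "z = unit_root d k" using z by (auto simp: primitive_roots_def)
  have \<eta>d: "\<eta> ^ d = 1" and z\<eta>: "z = \<eta> ^ k" and zd: "z ^ d = 1"
    using d k by (simp_all add: \<eta>_def unit_root_power unit_root_eq_1_iff)
  have cop: "coprime k d" using k(1) by (simp add: in_totatives_iff)
  then obtain x where x: "[k * x = 1] (mod d)" using cong_solve_coprime_nat[OF cop] by auto
  have "coprime x d"
    using x by (metis cong_imp_coprime cong_sym coprime_1_left coprime_mult_left_iff)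
  moreover have "z ^ x = \<eta>"
    using x d by (simp add: k(2) \<eta>_def unit_root_power unit_root_eq_iff cong_def)
  ultimately show ?thesis
    using order_le_order_root_power_coprime[OF d \<eta>d cop f0]
          order_le_order_root_power_coprime[OF d zd _ f0, of x]
    by (simp add: \<eta>_def z\<eta>)
qed

lemma one_not_in_primitive_roots:
  assumes "d > 1"
  shows "1 \<notin> primitive_roots d"
proof
  assume "1 \<in> primitive_roots d"
  then obtain k where k: "k \<in> totatives d" "d dvd k"
    using assms by (auto simp: primitive_roots_def unit_root_eq_1_iff)
  then have "k = d" by (auto simp: in_totatives_iff dest: dvd_imp_le)
  then show False using k(1) assms by (simp add: in_totatives_iff)
qed

lemma root_of_unity_prime_iff:
  fixes z :: complex
  assumes p: "prime p"
  shows "z ^ p = 1 \<longleftrightarrow> z = 1 \<or> z \<in> primitive_roots p"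
proof
  have p0: "p > 0" using p by (simp add: prime_gt_0_nat)
  assume "z ^ p = 1"
  then obtain j where j: "j < p" "z = unit_root p j" using root_of_unity_eq_unit_root p0 by blast
  show "z = 1 \<or> z \<in> primitive_roots p"
  proof (cases "j = 0")
    case False
    then have "coprime j p"
      using j(1) p by (metis coprime_commute dvd_imp_le neq0_conv not_less prime_imp_coprime)
    then show ?thesis using False j by (auto simp: primitive_roots_def in_totatives_iff)
  qed (use j in \<open>simp add: unit_root_def\<close>)
qed (use p in \<open>auto simp: primitive_roots_def unit_root_power_order prime_gt_0_nat\<close>)

lemma monom_minus_1_eq_geometric_sum:
  "monom (1::'a::comm_ring_1) n - 1 = [:-1, 1:] * (\<Sum>i<n. monom 1 i)"
proof -
  have "(monom (1::'a) 1 - 1) * (\<Sum>i<n. monom 1 i) = monom 1 n - 1"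
  proof (induction n)
    case (Suc n)
    have "(monom (1::'a) 1 - 1) * monom 1 n = monom 1 (Suc n) - monom 1 n"
      by (simp add: algebra_simps mult_monom)
    then show ?case using Suc by (simp add: algebra_simps)
  qed simp
  moreover have "[:-1, 1:] = monom (1::'a) 1 - 1"
    by (rule poly_eqI) (simp add: coeff_pCons coeff_monom split: nat.splits)
  ultimately show ?thesis by simp
qed

lemma linear_mult_cyclo_prime:
  assumes p: "prime p"
  shows "[:-1, 1:] * cyclo p = monom 1 p - 1"
proof (rule monic_poly_eqI_order)
  have p0: "p > 0" using p by (simp add: prime_gt_0_nat)
  show "lead_coeff ([:-1, 1:] * cyclo p) = 1" unfolding lead_coeff_mult lead_coeff_cyclo by simp
  show "lead_coeff (monom (1::complex) p - 1) = 1" by (rule lead_coeff_monom_minus_1[OF p0])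
  fix z :: complex
  have nz: "[:-1, 1:] * cyclo p \<noteq> 0"
    using cyclo_neq_0[of p] by (metis mult_eq_0_iff pCons_eq_0_iff zero_neq_one)
  have "order z [:-1, 1:] = (if z = 1 then 1 else 0)"
    using order_power_n_n[of 1 1] by (auto intro: order_0I)
  then have "order z ([:-1, 1:] * cyclo p) = (if z ^ p = 1 then 1 else 0)"
    using order_mult[OF nz] order_cyclo[OF p0, of z] root_of_unity_prime_iff[OF p, of z]
          one_not_in_primitive_roots[OF prime_gt_1_nat[OF p]]
    by auto
  then show "order z ([:-1, 1:] * cyclo p) = order z (monom 1 p - 1)"
    by (simp add: order_monom_minus_1[OF p0])
qed

lemma cyclo_prime:
  assumes "prime p"
  shows "cyclo p = map_poly of_int (\<Sum>i<p. monom 1 i)"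
proof -
  have "[:-1, 1:] * cyclo p = [:-1, 1:] * (\<Sum>i<p. monom 1 i)"
    using linear_mult_cyclo_prime[OF assms] by (simp add: monom_minus_1_eq_geometric_sum)
  then have "cyclo p = (\<Sum>i<p. monom 1 i)" by (metis mult_left_cancel pCons_eq_0_iff zero_neq_one)
  then show ?thesis by (simp add: map_poly_of_int_sum map_poly_of_int_monom)
qed

lemma prime_cyclo_not_dvd:
  fixes P :: "int poly"
  assumes p: "prime p" and P1: "poly P 1 = 1"
  shows "\<not> cyclo p dvd map_poly of_int P"
proof
  define U :: "int poly" where "U = (\<Sum>i<p. monom 1 i)"
  assume "cyclo p dvd map_poly of_int P"
  then obtain W :: "complex poly" where "map_poly of_int P = cyclo p * W" by (elim dvdE)
  then have "map_poly of_int P = map_poly of_int U * W" by (simp add: cyclo_prime[OF p] U_def)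
  moreover have "lead_coeff U = 1"
    using lead_coeff_cyclo[of p] lead_coeff_map_poly_of_int[of U, where 'a = complex]
    by (simp add: cyclo_prime[OF p] U_def)
  ultimately obtain W' where "P = U * W'" using monic_dvd_of_int_poly by blast
  then have "int p * poly W' 1 = 1" using P1 by (simp add: U_def poly_sum poly_monom)
  then show False using p by (metis dvd_triv_left int_dvd_int_iff nat_dvd_1_iff_1 not_prime_1 of_nat_1)
qed


section \<open>The semigroup polynomial\<close>

lemma semigroup_poly_eq:
  assumes ns: "numerical_semigroup S"
  shows "semigroup_poly S = 1 + (monom 1 1 - 1) * (\<Sum>g\<in>UNIV - S. monom 1 g)"
proof -
  define P where "P = (1 + (monom 1 1 - 1) * (\<Sum>g\<in>UNIV - S. monom 1 g) :: int poly)"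
  have fin: "finite (UNIV - S)" using ns by (simp add: numerical_semigroup_def)
  define I :: "int fps" where "I = Abs_fps (\<lambda>n. if n \<in> S then 1 else 0)"
  define E :: "int fps" where "E = Abs_fps (\<lambda>n. 1)"
  have gaps: "fps_of_poly (\<Sum>g\<in>UNIV - S. monom 1 g) = E - I"
    by (rule fps_ext) (simp add: I_def E_def fin coeff_sum coeff_monom)
  have "(1 - fps_X) * E = 1"
    by (rule fps_ext) (simp add: E_def algebra_simps fps_X_mult_nth)
  have "fps_of_poly P = 1 + (fps_X - 1) * (E - I)"
    by (simp add: P_def gaps fps_of_poly_add fps_of_poly_mult fps_of_poly_diff fps_of_poly_monom')
  also have "\<dots> = (1 - fps_X) * I" using \<open>(1 - fps_X) * E = 1\<close> by (simp add: algebra_simps)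
  finally have P: "fps_of_poly P = (1 - fps_X) * I" .
  have "semigroup_poly S = P"
    unfolding semigroup_poly_def
    by (rule the_equality) (use P in \<open>simp_all add: I_def flip: fps_of_poly_eq_iff\<close>)
  then show ?thesis by (simp add: P_def)
qed

lemma poly_semigroup_poly_1: "numerical_semigroup S \<Longrightarrow> poly (semigroup_poly S) 1 = 1"
  by (simp add: semigroup_poly_eq poly_monom)

lemma poly_semigroup_poly_0:
  assumes "numerical_semigroup S"
  shows "poly (semigroup_poly S) 0 = 1"
proof -
  have "0 \<in> S" using assms by (simp add: numerical_semigroup_def)
  then have "(\<Sum>g\<in>UNIV - S. (0::int) ^ g) = 0"
    by (intro sum.neutral) (metis DiffD2 power_0_left)
  then show ?thesis by (simp add: semigroup_poly_eq[OF assms] poly_sum poly_monom)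
qed

lemma kronecker_poly_eq_prod_cyclo:
  assumes kp: "kronecker_poly P" and P0: "poly P 0 \<noteq> 0"
  defines "f \<equiv> map_poly of_int P :: complex poly"
  shows "f = (\<Prod>d | d > 0 \<and> poly f (unit_root d 1) = 0. cyclo d ^ order (unit_root d 1) f)"
proof (rule poly_eq_prod_cyclo)
  show "lead_coeff f = 1" using kp by (simp add: kronecker_poly_def f_def lead_coeff_map_poly_of_int)
  show "\<exists>n>0. z ^ n = 1" if "poly f z = 0" for z
    using kronecker_poly_root_of_unity[OF kp P0] that by (simp add: f_def)
  have "P \<noteq> 0" using P0 by auto
  then show "order z f = order (unit_root d 1) f" if "d > 0" "z \<in> primitive_roots d" for d z
    unfolding f_def using order_primitive_root_eq that by blast
qed

lemma composite_if_cyclo_dvd: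
  fixes P :: "int poly"
  assumes "d > 0" "cyclo d dvd map_poly of_int P" "poly P 1 = 1"
  shows "composite d"
proof -
  have "poly (map_poly of_int P) (1::complex) = 1"
    using assms(3) poly_map_poly_of_int_of_int[of P 1] by simp
  moreover have "poly (cyclo 1) 1 = 0"
    unfolding cyclo_eq_prod_primitive_roots[OF zero_less_one] primitive_roots_1 by simp
  ultimately have "d \<noteq> 1" using assms(2) by (auto elim!: dvdE)
  moreover have "\<not> prime d" using prime_cyclo_not_dvd assms(2,3) by blast
  ultimately show ?thesis using assms(1) by (simp add: composite_def)
qed

theorem lemma3:
  fixes S :: "nat set"
  assumes "cyclotomic_semigroup S"
  shows "\<exists>D :: nat set. \<exists>e :: nat \<Rightarrow> nat. finite D \<and> (\<forall>d\<in>D. d > 0 \<and> e d > 0) \<and>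
           map_poly of_int (semigroup_poly S) = (\<Prod>d\<in>D. cyclo d ^ e d) \<and>
           (\<forall>d\<in>D. composite d)"
proof -
  define P where "P = semigroup_poly S"
  define f :: "complex poly" where "f = map_poly of_int P"
  define D where "D = {d. d > 0 \<and> poly f (unit_root d 1) = 0}"
  define e where "e d = order (unit_root d 1) f" for d
  have ns: "numerical_semigroup S" and kp: "kronecker_poly P"
    using assms by (simp_all add: cyclotomic_semigroup_def P_def)
  have f0: "f \<noteq> 0" using kp by (auto simp: kronecker_poly_def f_def map_poly_of_int_eq_0_iff)
  have finD: "finite D" unfolding D_def using f0 by (rule finite_orders_of_unit_root_zeros)
  have factor: "f = (\<Prod>d\<in>D. cyclo d ^ e d)"
    using kronecker_poly_eq_prod_cyclo[OF kp] poly_semigroup_poly_0[OF ns]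
    by (simp add: D_def e_def f_def P_def)
  have pos: "d > 0 \<and> e d > 0" if "d \<in> D" for d
    using that f0 by (simp add: D_def e_def order_gt_0_iff)
  have "composite d" if d: "d \<in> D" for d
  proof (rule composite_if_cyclo_dvd)
    have "cyclo d dvd cyclo d ^ e d" using pos[OF d] by (simp add: dvd_power)
    also have "\<dots> dvd f" unfolding factor using finD d by (rule dvd_prodI)
    finally show "cyclo d dvd map_poly of_int P" by (simp add: f_def)
  qed (use pos[OF d] poly_semigroup_poly_1[OF ns] in \<open>simp_all add: P_def\<close>)
  moreover have "map_poly of_int (semigroup_poly S) = (\<Prod>d\<in>D. cyclo d ^ e d)"
    using factor unfolding f_def P_def .
  ultimately show ?thesis using finD pos by blast
qed

end
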